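(* Let $p\ge1$. Let $U$, $V$ be discrete random variables taking values in a common finite set $\mathcal{U}$, and $W$ a discrete random variable taking values in a finite set $\mathcal{W}$, all on a common probability space, such that $\|u-u'\|_p=\sqrt[p]{2}$ for distinct $u,u'\in\mathcal{U}$ and $\|w-w'\|_p=\sqrt[p]{2}$ for distinct $w,w'\in\mathcal{W}$ (and $0$ for equal points). Equip pairs with the ground metric $\|(u,w)-(u',w')\|_p=\left(\|u-u'\|_p^p+\|w-w'\|_p^p\right)^{1/p}$. Then, with $W_1$ the 1-Wasserstein distance, $$W_1(p(U,W),p(U)p(W))=\sum_{w}W_1(p(U\mid W=w),p(U))\,\mathbb{P}(W=w),$$ $$W_1(p(U,W),p(V,W))=\sum_{w}W_1(p(U\mid W=w),p(V\mid W=w))\,\mathbb{P}(W=w),$$ $$W_1(p(U)p(W),p(V)p(W))=\sum_{w}W_1(p(U),p(V))\,\mathbb{P}(W=w).$$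
   Context: $p(U,W)$ denotes the joint law, $p(U)p(W)$ the product of marginal laws, and $p(U\mid W=w)$ the conditional law. *)

theory Defs
  imports "HOL-Probability.Probability"
begin

definition lpdist :: "real \<Rightarrow> real ^ 'n \<Rightarrow> real ^ 'n \<Rightarrow> real" where
  "lpdist p x y = (\<Sum>i\<in>UNIV. \<bar>x $ i - y $ i\<bar> powr p) powr (1 / p)"

definition pair_lpdist :: "real \<Rightarrow> ((real ^ 'n) \<times> (real ^ 'm)) \<Rightarrow> ((real ^ 'n) \<times> (real ^ 'm)) \<Rightarrow> real" where
  "pair_lpdist p a b = (lpdist p (fst a) (fst b) powr p + lpdist p (snd a) (snd b) powr p) powr (1 / p)"

definition couplings :: "'a pmf \<Rightarrow> 'b pmf \<Rightarrow> ('a \<times> 'b) pmf set" where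
  "couplings \<mu> \<nu> = {\<pi>. map_pmf fst \<pi> = \<mu> \<and> map_pmf snd \<pi> = \<nu>}"

definition wasserstein1 :: "('a \<Rightarrow> 'a \<Rightarrow> real) \<Rightarrow> 'a pmf \<Rightarrow> 'a pmf \<Rightarrow> real" where
  "wasserstein1 d \<mu> \<nu> = (INF \<pi>\<in>couplings \<mu> \<nu>. measure_pmf.expectation \<pi> (\<lambda>(x, y). d x y))"

end

(*
  If a ground metric takes a single value c between distinct points of a finite set, then W1 is
  c times the total variation distance: a coupling of mu and nu can keep at most
  min (mu x) (nu x) on the diagonal at x, and a maximal coupling keeps exactly that.  The pair
  metric on U x W equals c = 2 powr (1/p) between distinct points with the same w-coordinate
  and is larger otherwise; when the two laws have the same w-marginal, the excess mass can be
  transported within the fibres {w = const}, so W1 is again c times the total variation.  In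
  each of the three identities both laws disintegrate as P(W = w) times a law on U, and the
  total variation on U x W splits into the P(W = w)-weighted sum of total variations on U.
*)

theory Submission
  imports Defs
begin

text \<open>For probability mass functions supported in S this is the total variation distance.\<close>
definition total_variation_on :: "'a set \<Rightarrow> ('a \<Rightarrow> real) \<Rightarrow> ('a \<Rightarrow> real) \<Rightarrow> real" where
  "total_variation_on S f g = (\<Sum>x\<in>S. f x - min (f x) (g x))"

lemma total_variation_on_pmf:
  assumes "finite S" "set_pmf \<mu> \<subseteq> S"
  shows "total_variation_on S (pmf \<mu>) (pmf \<nu>) = 1 - (\<Sum>x\<in>S. min (pmf \<mu> x) (pmf \<nu> x))"
  using sum_pmf_eq_1[OF assms] by (simp add: total_variation_on_def sum_subtractf)

lemma total_variation_on_Times: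
  assumes "\<forall>u\<in>A. \<forall>w\<in>B. f (u, w) = q w * \<alpha> w u \<and> g (u, w) = q w * \<beta> w u"
    and "\<forall>w\<in>B. q w \<ge> 0"
  shows "total_variation_on (A \<times> B) f g = (\<Sum>w\<in>B. q w * total_variation_on A (\<alpha> w) (\<beta> w))"
proof -
  have "total_variation_on (A \<times> B) f g = (\<Sum>u\<in>A. \<Sum>w\<in>B. f (u, w) - min (f (u, w)) (g (u, w)))"
    by (simp add: total_variation_on_def sum.cartesian_product split_beta)
  also have "\<dots> = (\<Sum>u\<in>A. \<Sum>w\<in>B. q w * (\<alpha> w u - min (\<alpha> w u) (\<beta> w u)))"
    using assms by (intro sum.cong refl) (simp add: right_diff_distrib min_mult_distrib_left)
  also have "\<dots> = (\<Sum>w\<in>B. q w * total_variation_on A (\<alpha> w) (\<beta> w))"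
    by (subst sum.swap) (simp add: total_variation_on_def sum_distrib_left)
  finally show ?thesis .
qed

lemma pmf_map_eq_sum_fibre:
  assumes "finite S" "set_pmf M \<subseteq> S"
  shows "pmf (map_pmf g M) x = (\<Sum>z\<in>{z\<in>S. g z = x}. pmf M z)"
proof -
  have "pmf (map_pmf g M) x = measure M (g -` {x} \<inter> set_pmf M)"
    by (simp add: pmf_map measure_Int_set_pmf)
  also have "g -` {x} \<inter> set_pmf M = {z\<in>S. g z = x} \<inter> set_pmf M"
    using assms by auto
  finally show ?thesis
    using assms by (simp add: measure_Int_set_pmf measure_measure_pmf_finite)
qed

lemma pmf_map_fst_eq_sum:
  assumes "finite S" "set_pmf \<pi> \<subseteq> UNIV \<times> S"
  shows "pmf (map_pmf fst \<pi>) x = (\<Sum>y\<in>S. pmf \<pi> (x, y))"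
proof -
  have "pmf (map_pmf fst \<pi>) x = measure \<pi> (fst -` {x} \<inter> set_pmf \<pi>)"
    by (simp add: pmf_map measure_Int_set_pmf)
  also have "fst -` {x} \<inter> set_pmf \<pi> = Pair x ` S \<inter> set_pmf \<pi>"
    using assms(2) by auto
  finally show ?thesis
    using assms(1)
    by (simp add: measure_Int_set_pmf measure_measure_pmf_finite sum.reindex inj_on_def)
qed

lemma pmf_map_snd_eq_sum:
  assumes "finite S" "set_pmf \<pi> \<subseteq> S \<times> UNIV"
  shows "pmf (map_pmf snd \<pi>) y = (\<Sum>x\<in>S. pmf \<pi> (x, y))"
proof -
  have "pmf (map_pmf snd \<pi>) y = measure \<pi> (snd -` {y} \<inter> set_pmf \<pi>)"
    by (simp add: pmf_map measure_Int_set_pmf)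
  also have "snd -` {y} \<inter> set_pmf \<pi> = (\<lambda>x. (x, y)) ` S \<inter> set_pmf \<pi>"
    using assms(2) by auto
  finally show ?thesis
    using assms(1)
    by (simp add: measure_Int_set_pmf measure_measure_pmf_finite sum.reindex inj_on_def)
qed

lemma set_pmf_coupling_subset:
  assumes "\<pi> \<in> couplings \<mu> \<nu>"
  shows "set_pmf \<pi> \<subseteq> set_pmf \<mu> \<times> set_pmf \<nu>"
  using assms by (force simp: couplings_def)

lemma pmf_diagonal_le_coupling:
  assumes "\<pi> \<in> couplings \<mu> \<nu>"
  shows "pmf \<pi> (x, x) \<le> min (pmf \<mu> x) (pmf \<nu> x)"
proof -
  \<comment> \<open>applied to the two marginals, f = fst and f = snd\<close>
  have "pmf \<pi> (x, x) \<le> measure \<pi> (f -` {x})" if "f (x, x) = x" for f :: "'a \<times> 'a \<Rightarrow> 'a"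
    using that
    by (subst measure_pmf_single[symmetric]) (auto intro: measure_pmf.finite_measure_mono)
  then show ?thesis
    using assms by (auto simp: couplings_def pmf_map[symmetric])
qed

lemma coupling_of_marginal_sums:
  assumes fin: "finite S" and supp: "set_pmf \<mu> \<subseteq> S" "set_pmf \<nu> \<subseteq> S"
    and nonneg: "\<And>z. f z \<ge> 0" and outside: "\<And>z. z \<notin> S \<times> S \<Longrightarrow> f z = 0"
    and rows: "\<And>x. x \<in> S \<Longrightarrow> (\<Sum>y\<in>S. f (x, y)) = pmf \<mu> x"
    and cols: "\<And>y. y \<in> S \<Longrightarrow> (\<Sum>x\<in>S. f (x, y)) = pmf \<nu> y"
  obtains \<pi> where "\<pi> \<in> couplings \<mu> \<nu>" "\<And>z. pmf \<pi> z = f z"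
proof
  have all_rows: "(\<Sum>y\<in>S. f (x, y)) = pmf \<mu> x" and all_cols: "(\<Sum>y\<in>S. f (y, x)) = pmf \<nu> x" for x
    using rows cols supp outside by (cases "x \<in> S"; force simp: set_pmf_iff)+
  have "(\<Sum>z\<in>S \<times> S. f z) = (\<Sum>x\<in>S. \<Sum>y\<in>S. f (x, y))"
    by (simp add: sum.cartesian_product)
  also have "\<dots> = 1"
    using sum_pmf_eq_1[OF fin supp(1)] by (simp add: all_rows)
  finally have "(\<integral>\<^sup>+z. ennreal (f z) \<partial>count_space UNIV) = 1"
    using fin nonneg outside
    by (subst nn_integral_count_space'[of "S \<times> S"]) (auto simp: sum_ennreal)
  with nonneg show pmf_embed: "pmf (embed_pmf f) z = f z" for z
    by (rule pmf_embed_pmf)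
  then have supp_embed: "set_pmf (embed_pmf f) \<subseteq> UNIV \<times> S" "set_pmf (embed_pmf f) \<subseteq> S \<times> UNIV"
    using outside by (auto simp: set_pmf_eq)
  show "embed_pmf f \<in> couplings \<mu> \<nu>"
    using pmf_map_fst_eq_sum[OF fin supp_embed(1)] pmf_map_snd_eq_sum[OF fin supp_embed(2)]
    by (auto intro!: pmf_eqI simp: couplings_def pmf_embed all_rows all_cols)
qed

lemma sum_fibre_proportional:
  fixes a b :: "'a \<Rightarrow> real"
  assumes fin: "finite S" and x: "x \<in> S" and nonneg: "\<forall>y\<in>S. a y \<ge> 0"
    and sum_a: "(\<Sum>y\<in>{y\<in>S. k y = k x}. a y) = t"
    and sum_b: "(\<Sum>y\<in>{y\<in>S. k y = k x}. b y) = t"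
  shows "(\<Sum>y\<in>S. if k y = k x then a x * b y / t else 0) = a x"
proof (cases "t = 0")
  case True
  have "a x \<le> (\<Sum>y\<in>{y\<in>S. k y = k x}. a y)"
    using fin x nonneg by (intro member_le_sum[where f = a]) auto
  with True sum_a nonneg x have "a x = 0" by force
  then show ?thesis
    by (simp add: sum.neutral)
next
  case False
  have "(\<Sum>y\<in>S. if k y = k x then a x * b y / t else 0) = (\<Sum>y\<in>{y\<in>S. k y = k x}. a x * b y / t)"
    using fin by (simp add: sum.inter_filter)
  also have "\<dots> = a x * (\<Sum>y\<in>{y\<in>S. k y = k x}. b y) / t"
    by (simp add: sum_distrib_left sum_divide_distrib)
  finally show ?thesis
    using False sum_b by simp
qed

lemma exists_transport_plan_within_fibres:
  fixes a b :: "'a \<Rightarrow> real"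
  assumes fin: "finite S" and nonneg: "\<forall>x\<in>S. a x \<ge> 0" "\<forall>x\<in>S. b x \<ge> 0"
    and fibre_sums: "\<And>w. (\<Sum>x\<in>{x\<in>S. k x = w}. a x) = (\<Sum>x\<in>{x\<in>S. k x = w}. b x)"
  obtains h where "\<And>z. h z \<ge> 0"
    "\<And>x y. h (x, y) \<noteq> 0 \<Longrightarrow> x \<in> S \<and> y \<in> S \<and> k x = k y \<and> a x \<noteq> 0 \<and> b y \<noteq> 0"
    "\<And>x. x \<in> S \<Longrightarrow> (\<Sum>y\<in>S. h (x, y)) = a x"
    "\<And>y. y \<in> S \<Longrightarrow> (\<Sum>x\<in>S. h (x, y)) = b y"
proof
  define t where "t w = (\<Sum>x\<in>{x\<in>S. k x = w}. a x)" for w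
  define h where "h = (\<lambda>(x, y). if x \<in> S \<and> y \<in> S \<and> k y = k x then a x * b y / t (k x) else 0)"
  show "h z \<ge> 0" for z
    using nonneg
    by (cases z) (auto simp: h_def t_def intro!: mult_nonneg_nonneg divide_nonneg_nonneg sum_nonneg)
  show "x \<in> S \<and> y \<in> S \<and> k x = k y \<and> a x \<noteq> 0 \<and> b y \<noteq> 0" if "h (x, y) \<noteq> 0" for x y
    using that by (auto simp: h_def split: if_splits)
  show "(\<Sum>y\<in>S. h (x, y)) = a x" if "x \<in> S" for x
  proof -
    have "(\<Sum>y\<in>S. h (x, y)) = (\<Sum>y\<in>S. if k y = k x then a x * b y / t (k x) else 0)"
      using that by (intro sum.cong) (auto simp: h_def)
    also have "\<dots> = a x"
      using fin that nonneg fibre_sums by (intro sum_fibre_proportional) (auto simp: t_def)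
    finally show ?thesis .
  qed
  show "(\<Sum>x\<in>S. h (x, y)) = b y" if "y \<in> S" for y
  proof -
    have "(\<Sum>x\<in>S. h (x, y)) = (\<Sum>x\<in>S. if k x = k y then b y * a x / t (k y) else 0)"
      using that by (intro sum.cong) (auto simp: h_def)
    also have "\<dots> = b y"
      using fin that nonneg fibre_sums by (intro sum_fibre_proportional) (auto simp: t_def)
    finally show ?thesis .
  qed
qed

lemma exists_maximal_coupling_within_fibres:
  assumes fin: "finite S" and supp: "set_pmf \<mu> \<subseteq> S" "set_pmf \<nu> \<subseteq> S"
    and marg: "map_pmf k \<mu> = map_pmf k \<nu>"
  obtains \<pi> where "\<pi> \<in> couplings \<mu> \<nu>" "\<And>x. pmf \<pi> (x, x) = min (pmf \<mu> x) (pmf \<nu> x)"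
    "\<And>z. z \<in> set_pmf \<pi> \<Longrightarrow> k (fst z) = k (snd z)"
proof -
  define m where "m x = min (pmf \<mu> x) (pmf \<nu> x)" for x
  define a where "a x = pmf \<mu> x - m x" for x
  define b where "b x = pmf \<nu> x - m x" for x
  have a_nonneg: "\<forall>x\<in>S. a x \<ge> 0" and b_nonneg: "\<forall>x\<in>S. b x \<ge> 0" and excess: "a x = 0 \<or> b x = 0" for x
    by (auto simp: a_def b_def m_def min_def)
  have "(\<Sum>x\<in>{x\<in>S. k x = w}. a x) = (\<Sum>x\<in>{x\<in>S. k x = w}. b x)" for w
    using pmf_map_eq_sum_fibre[OF fin supp(1), of k w] pmf_map_eq_sum_fibre[OF fin supp(2), of k w]
    by (simp add: marg a_def b_def sum_subtractf)
  then obtain h where h: "\<And>z. h z \<ge> 0"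
    "\<And>x y. h (x, y) \<noteq> 0 \<Longrightarrow> x \<in> S \<and> y \<in> S \<and> k x = k y \<and> a x \<noteq> 0 \<and> b y \<noteq> 0"
    "\<And>x. x \<in> S \<Longrightarrow> (\<Sum>y\<in>S. h (x, y)) = a x" "\<And>y. y \<in> S \<Longrightarrow> (\<Sum>x\<in>S. h (x, y)) = b y"
    using exists_transport_plan_within_fibres[OF fin a_nonneg b_nonneg] by blast
  \<comment> \<open>The common mass m stays on the diagonal; only the excesses a and b are transported.\<close>
  define f where "f z = (if fst z = snd z \<and> fst z \<in> S then m (fst z) else 0) + h z" for z
  have "(\<Sum>y\<in>S. f (x, y)) = pmf \<mu> x" "(\<Sum>y\<in>S. f (y, x)) = pmf \<nu> x" if "x \<in> S" for x
    using that fin h(3,4) by (simp_all add: f_def sum.distrib a_def b_def)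
  moreover have "f z \<ge> 0" for z
    using h(1) by (simp add: f_def m_def)
  moreover have "f z = 0" if "z \<notin> S \<times> S" for z
    using that h(2)[of "fst z" "snd z"] by (auto simp: f_def mem_Times_iff)
  ultimately obtain \<pi> where \<pi>: "\<pi> \<in> couplings \<mu> \<nu>" "\<And>z. pmf \<pi> z = f z"
    using coupling_of_marginal_sums[OF fin supp] by blast
  show ?thesis
  proof (rule that[OF \<pi>(1)])
    show "pmf \<pi> (x, x) = min (pmf \<mu> x) (pmf \<nu> x)" for x
    proof -
      have "h (x, x) = 0"
        using h(2)[of x x] excess[of x] by auto
      moreover have "pmf \<mu> x = 0" if "x \<notin> S"
        using that supp(1) by (auto simp: set_pmf_iff)
      ultimately show ?thesis
        by (auto simp: \<pi>(2) f_def m_def)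
    qed
    show "k (fst z) = k (snd z)" if "z \<in> set_pmf \<pi>" for z
      using that h(2)[of "fst z" "snd z"] by (auto simp: set_pmf_iff \<pi>(2) f_def split: if_splits)
  qed
qed

lemma sum_pmf_off_diagonal:
  assumes fin: "finite S" and supp: "set_pmf \<pi> \<subseteq> S \<times> S"
  shows "(\<Sum>z\<in>S \<times> S. pmf \<pi> z * (if fst z = snd z then 0 else c)) = c * (1 - (\<Sum>x\<in>S. pmf \<pi> (x, x)))"
proof -
  have "(\<Sum>z\<in>S \<times> S. pmf \<pi> z * (if fst z = snd z then 0 else c)) =
      (\<Sum>x\<in>S. \<Sum>y\<in>S. c * pmf \<pi> (x, y) - (if y = x then c * pmf \<pi> (x, x) else 0))"
    by (simp add: sum.cartesian_product) (intro sum.cong refl, auto)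
  also have "\<dots> = c * (\<Sum>z\<in>S \<times> S. pmf \<pi> z) - c * (\<Sum>x\<in>S. pmf \<pi> (x, x))"
    using fin by (simp add: sum_subtractf sum.cartesian_product sum_distrib_left)
  finally show ?thesis
    using sum_pmf_eq_1[OF _ supp] fin by (simp add: right_diff_distrib)
qed

lemma expectation_coupling_eq_sum:
  assumes fin: "finite S" and supp: "set_pmf \<mu> \<subseteq> S" "set_pmf \<nu> \<subseteq> S"
    and \<sigma>: "\<sigma> \<in> couplings \<mu> \<nu>"
  shows "measure_pmf.expectation \<sigma> (\<lambda>(x, y). d x y) = (\<Sum>z\<in>S \<times> S. pmf \<sigma> z * d (fst z) (snd z))"
proof -
  have "set_pmf \<sigma> \<subseteq> S \<times> S"
    using set_pmf_coupling_subset[OF \<sigma>] supp by blast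
  with fin show ?thesis
    by (subst integral_measure_pmf[where A = "S \<times> S"]) (auto simp: split_beta)
qed

lemma total_variation_le_expectation_coupling:
  fixes d :: "'a \<Rightarrow> 'a \<Rightarrow> real"
  assumes fin: "finite S" and supp: "set_pmf \<mu> \<subseteq> S" "set_pmf \<nu> \<subseteq> S"
    and \<sigma>: "\<sigma> \<in> couplings \<mu> \<nu>" and c: "c \<ge> 0"
    and diag: "\<forall>x\<in>S. d x x = 0"
    and off_diag: "\<forall>x\<in>S. \<forall>y\<in>S. x \<noteq> y \<longrightarrow> c \<le> d x y"
  shows "c * total_variation_on S (pmf \<mu>) (pmf \<nu>) \<le> measure_pmf.expectation \<sigma> (\<lambda>(x, y). d x y)"
proof -
  have "(\<Sum>x\<in>S. pmf \<sigma> (x, x)) \<le> (\<Sum>x\<in>S. min (pmf \<mu> x) (pmf \<nu> x))"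
    using pmf_diagonal_le_coupling[OF \<sigma>] by (rule sum_mono)
  then have "c * total_variation_on S (pmf \<mu>) (pmf \<nu>) \<le>
      (\<Sum>z\<in>S \<times> S. pmf \<sigma> z * (if fst z = snd z then 0 else c))"
    using fin supp set_pmf_coupling_subset[OF \<sigma>] c
    by (subst sum_pmf_off_diagonal) (auto simp: total_variation_on_pmf mult_left_mono)
  also have "\<dots> \<le> (\<Sum>z\<in>S \<times> S. pmf \<sigma> z * d (fst z) (snd z))"
    using diag off_diag by (intro sum_mono mult_left_mono) auto
  finally show ?thesis
    by (simp add: expectation_coupling_eq_sum[OF fin supp \<sigma>])
qed

lemma wasserstein1_eq_total_variation:
  fixes d :: "'a \<Rightarrow> 'a \<Rightarrow> real" and k :: "'a \<Rightarrow> 'b"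
  assumes fin: "finite S" and supp: "set_pmf \<mu> \<subseteq> S" "set_pmf \<nu> \<subseteq> S"
    and marg: "map_pmf k \<mu> = map_pmf k \<nu>" and c: "c \<ge> 0"
    and diag: "\<forall>x\<in>S. d x x = 0"
    and off_diag: "\<forall>x\<in>S. \<forall>y\<in>S. x \<noteq> y \<longrightarrow> c \<le> d x y"
    and within_fibre: "\<forall>x\<in>S. \<forall>y\<in>S. x \<noteq> y \<longrightarrow> k x = k y \<longrightarrow> d x y = c"
  shows "wasserstein1 d \<mu> \<nu> = c * total_variation_on S (pmf \<mu>) (pmf \<nu>)"
proof -
  let ?cost = "\<lambda>\<sigma>. measure_pmf.expectation \<sigma> (\<lambda>(x, y). d x y)"
  obtain \<pi> where \<pi>: "\<pi> \<in> couplings \<mu> \<nu>" "\<And>x. pmf \<pi> (x, x) = min (pmf \<mu> x) (pmf \<nu> x)"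
    "\<And>z. z \<in> set_pmf \<pi> \<Longrightarrow> k (fst z) = k (snd z)"
    using exists_maximal_coupling_within_fibres[OF fin supp marg] by blast
  have "?cost \<pi> = (\<Sum>z\<in>S \<times> S. pmf \<pi> z * (if fst z = snd z then 0 else c))"
    unfolding expectation_coupling_eq_sum[OF fin supp \<pi>(1)]
  proof (intro sum.cong refl)
    fix z assume "z \<in> S \<times> S"
    then show "pmf \<pi> z * d (fst z) (snd z) = pmf \<pi> z * (if fst z = snd z then 0 else c)"
      using \<pi>(3)[of z] diag within_fibre by (cases "pmf \<pi> z = 0") (auto simp: set_pmf_iff)
  qed
  also have "\<dots> = c * total_variation_on S (pmf \<mu>) (pmf \<nu>)"
    using fin supp set_pmf_coupling_subset[OF \<pi>(1)]
    by (subst sum_pmf_off_diagonal) (auto simp: \<pi>(2) total_variation_on_pmf)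
  finally have "c * total_variation_on S (pmf \<mu>) (pmf \<nu>) \<in> ?cost ` couplings \<mu> \<nu>"
    using \<pi>(1) by (metis image_eqI)
  then show ?thesis
    unfolding wasserstein1_def
    using total_variation_le_expectation_coupling[OF fin supp _ c diag off_diag]
    by (intro cInf_eq_minimum) auto
qed

lemma pmf_map_cond_pmf:
  assumes pos: "measure_pmf.prob P A > 0"
  shows "pmf (map_pmf X (cond_pmf P A)) u =
    measure_pmf.prob P (A \<inter> X -` {u}) / measure_pmf.prob P A"
proof -
  have "set_pmf P \<inter> A \<noteq> {}"
    using pos measure_Int_set_pmf[of P A] by (auto simp: Int_commute)
  then have "pmf (map_pmf X (cond_pmf P A)) u =
      measure (uniform_measure (measure_pmf P) A) (X -` {u})"
    by (simp add: pmf_map cond_pmf.rep_eq)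
  also have "\<dots> = measure_pmf.prob P (A \<inter> X -` {u}) / measure_pmf.prob P A"
    using pos by (intro measure_uniform_measure) (auto simp: measure_pmf.emeasure_eq_measure)
  finally show ?thesis .
qed

lemma pmf_map_pair_eq_cond_pmf:
  "pmf (map_pmf (\<lambda>\<omega>. (X \<omega>, W \<omega>)) P) (u, w) =
    pmf (map_pmf W P) w * pmf (map_pmf X (cond_pmf P {\<omega>. W \<omega> = w})) u"
proof -
  have joint: "pmf (map_pmf (\<lambda>\<omega>. (X \<omega>, W \<omega>)) P) (u, w) =
      measure_pmf.prob P ({\<omega>. W \<omega> = w} \<inter> X -` {u})"
    by (simp add: pmf_map vimage_def Int_def conj_commute)
  have law: "pmf (map_pmf W P) w = measure_pmf.prob P {\<omega>. W \<omega> = w}"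
    by (simp add: pmf_map vimage_def)
  show ?thesis
  proof (cases "pmf (map_pmf W P) w = 0")
    case True
    moreover have "measure_pmf.prob P ({\<omega>. W \<omega> = w} \<inter> X -` {u}) \<le> measure_pmf.prob P {\<omega>. W \<omega> = w}"
      by (rule measure_pmf.finite_measure_mono) auto
    ultimately show ?thesis
      using joint law by (simp add: measure_nonneg antisym)
  next
    case False
    then show ?thesis
      using joint law by (simp add: pmf_map_cond_pmf zero_less_measure_iff)
  qed
qed

lemma lpdist_self [simp]: "lpdist p x x = 0"
  by (simp add: lpdist_def)

lemma lpdist_powr_on_equidistant:
  assumes "p > 0" and "\<forall>u\<in>A. \<forall>u'\<in>A. u \<noteq> u' \<longrightarrow> lpdist p u u' = 2 powr (1 / p)"
    and "u \<in> A" "u' \<in> A"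
  shows "lpdist p u u' powr p = (if u = u' then 0 else 2)"
  using assms by (auto simp: powr_powr)

lemma wasserstein1_lpdist_equidistant:
  assumes "p > 0" and "finite \<U>"
    and "\<forall>u\<in>\<U>. \<forall>u'\<in>\<U>. u \<noteq> u' \<longrightarrow> lpdist p u u' = 2 powr (1 / p)"
    and "set_pmf \<mu> \<subseteq> \<U>" "set_pmf \<nu> \<subseteq> \<U>"
  shows "wasserstein1 (lpdist p) \<mu> \<nu> = 2 powr (1 / p) * total_variation_on \<U> (pmf \<mu>) (pmf \<nu>)"
  by (rule wasserstein1_eq_total_variation[where k = "\<lambda>_. ()"]) (use assms in auto)

lemma wasserstein1_pair_lpdist_equidistant:
  assumes p: "p > 0" and fin: "finite \<U>" "finite \<W>"
    and dist_U: "\<forall>u\<in>\<U>. \<forall>u'\<in>\<U>. u \<noteq> u' \<longrightarrow> lpdist p u u' = 2 powr (1 / p)"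
    and dist_W: "\<forall>w\<in>\<W>. \<forall>w'\<in>\<W>. w \<noteq> w' \<longrightarrow> lpdist p w w' = 2 powr (1 / p)"
    and supp: "set_pmf \<mu> \<subseteq> \<U> \<times> \<W>" "set_pmf \<nu> \<subseteq> \<U> \<times> \<W>"
    and marg: "map_pmf snd \<mu> = map_pmf snd \<nu>"
  shows "wasserstein1 (pair_lpdist p) \<mu> \<nu> =
    2 powr (1 / p) * total_variation_on (\<U> \<times> \<W>) (pmf \<mu>) (pmf \<nu>)"
proof (rule wasserstein1_eq_total_variation[OF _ supp marg])
  have dist: "pair_lpdist p (u, w) (u', w') =
      ((if u = u' then 0 else 2) + (if w = w' then 0 else 2)) powr (1 / p)"
    if "u \<in> \<U>" "u' \<in> \<U>" "w \<in> \<W>" "w' \<in> \<W>" for u u' w w'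
    using that lpdist_powr_on_equidistant[OF p dist_U] lpdist_powr_on_equidistant[OF p dist_W]
    by (simp add: pair_lpdist_def)
  show "\<forall>x\<in>\<U> \<times> \<W>. \<forall>y\<in>\<U> \<times> \<W>. x \<noteq> y \<longrightarrow> 2 powr (1 / p) \<le> pair_lpdist p x y"
    using p by (auto simp: dist intro!: powr_mono2)
  show "\<forall>x\<in>\<U> \<times> \<W>. \<forall>y\<in>\<U> \<times> \<W>. x \<noteq> y \<longrightarrow> snd x = snd y \<longrightarrow> pair_lpdist p x y = 2 powr (1 / p)"
    by (auto simp: dist)
qed (use fin p in \<open>auto simp: pair_lpdist_def\<close>)

lemma wasserstein1_pair_lpdist_disintegration:
  assumes p: "p > 0" and fin: "finite \<U>" "finite \<W>"
    and dist_U: "\<forall>u\<in>\<U>. \<forall>u'\<in>\<U>. u \<noteq> u' \<longrightarrow> lpdist p u u' = 2 powr (1 / p)"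
    and dist_W: "\<forall>w\<in>\<W>. \<forall>w'\<in>\<W>. w \<noteq> w' \<longrightarrow> lpdist p w w' = 2 powr (1 / p)"
    and supp: "set_pmf \<mu> \<subseteq> \<U> \<times> \<W>" "set_pmf \<nu> \<subseteq> \<U> \<times> \<W>"
    and marg: "map_pmf snd \<mu> = \<rho>" "map_pmf snd \<nu> = \<rho>"
    and supp_cond: "\<And>w. w \<in> \<W> \<Longrightarrow> set_pmf (\<alpha> w) \<subseteq> \<U> \<and> set_pmf (\<beta> w) \<subseteq> \<U>"
    and disint: "\<And>u w. u \<in> \<U> \<Longrightarrow> w \<in> \<W> \<Longrightarrow>
      pmf \<mu> (u, w) = pmf \<rho> w * pmf (\<alpha> w) u \<and> pmf \<nu> (u, w) = pmf \<rho> w * pmf (\<beta> w) u"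
  shows "wasserstein1 (pair_lpdist p) \<mu> \<nu> = (\<Sum>w\<in>\<W>. wasserstein1 (lpdist p) (\<alpha> w) (\<beta> w) * pmf \<rho> w)"
proof -
  have "wasserstein1 (pair_lpdist p) \<mu> \<nu> =
      2 powr (1 / p) * total_variation_on (\<U> \<times> \<W>) (pmf \<mu>) (pmf \<nu>)"
    using marg by (intro wasserstein1_pair_lpdist_equidistant[OF p fin dist_U dist_W supp]) simp
  also have "\<dots> = 2 powr (1 / p) * (\<Sum>w\<in>\<W>. pmf \<rho> w * total_variation_on \<U> (pmf (\<alpha> w)) (pmf (\<beta> w)))"
    using disint by (subst total_variation_on_Times) auto
  also have "\<dots> = (\<Sum>w\<in>\<W>. wasserstein1 (lpdist p) (\<alpha> w) (\<beta> w) * pmf \<rho> w)"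
    using supp_cond
    by (simp add: wasserstein1_lpdist_equidistant[OF p fin(1) dist_U] sum_distrib_left mult_ac)
  finally show ?thesis .
qed

theorem lemma7:
  fixes p :: real
    and P :: "'a pmf"
    and U V :: "'a \<Rightarrow> real ^ 'n"
    and W :: "'a \<Rightarrow> real ^ 'm"
    and \<U> :: "(real ^ 'n) set"
    and \<W> :: "(real ^ 'm) set"
  assumes p: "p \<ge> 1"
    and fin_U: "finite \<U>" and fin_W: "finite \<W>"
    and U_vals: "\<forall>\<omega>. U \<omega> \<in> \<U>" and V_vals: "\<forall>\<omega>. V \<omega> \<in> \<U>"
    and W_vals: "\<forall>\<omega>. W \<omega> \<in> \<W>"
    and dist_U: "\<forall>u\<in>\<U>. \<forall>u'\<in>\<U>. u \<noteq> u' \<longrightarrow> lpdist p u u' = 2 powr (1 / p)"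
    and dist_W: "\<forall>w\<in>\<W>. \<forall>w'\<in>\<W>. w \<noteq> w' \<longrightarrow> lpdist p w w' = 2 powr (1 / p)"
  shows
    "(wasserstein1 (pair_lpdist p) (map_pmf (\<lambda>\<omega>. (U \<omega>, W \<omega>)) P)
        (pair_pmf (map_pmf U P) (map_pmf W P))
     = (\<Sum>w\<in>\<W>. wasserstein1 (lpdist p)
          (map_pmf U (cond_pmf P {\<omega>. W \<omega> = w})) (map_pmf U P)
          * measure_pmf.prob P {\<omega>. W \<omega> = w})) \<and>
    (wasserstein1 (pair_lpdist p) (map_pmf (\<lambda>\<omega>. (U \<omega>, W \<omega>)) P)
        (map_pmf (\<lambda>\<omega>. (V \<omega>, W \<omega>)) P)
     = (\<Sum>w\<in>\<W>. wasserstein1 (lpdist p)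
          (map_pmf U (cond_pmf P {\<omega>. W \<omega> = w}))
          (map_pmf V (cond_pmf P {\<omega>. W \<omega> = w}))
          * measure_pmf.prob P {\<omega>. W \<omega> = w})) \<and>
    (wasserstein1 (pair_lpdist p) (pair_pmf (map_pmf U P) (map_pmf W P))
        (pair_pmf (map_pmf V P) (map_pmf W P))
     = (\<Sum>w\<in>\<W>. wasserstein1 (lpdist p) (map_pmf U P) (map_pmf V P)
          * measure_pmf.prob P {\<omega>. W \<omega> = w}))"
proof -
  have "p > 0"
    using p by simp
  have law_W: "pmf (map_pmf W P) w = measure_pmf.prob P {\<omega>. W \<omega> = w}" for w
    by (simp add: pmf_map vimage_def)
  show ?thesis
    unfolding law_W[symmetric]
    by (intro conjI wasserstein1_pair_lpdist_disintegration[OF \<open>p > 0\<close> fin_U fin_W dist_U dist_W])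
      (use U_vals V_vals W_vals in
        \<open>auto simp: map_pmf_comp map_snd_pair_pmf pmf_map_pair_eq_cond_pmf pmf_pair\<close>)
qed

end
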